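(* Assume there exists $\mathbf q\in\Omega$ with $\mu(Dq^2+k)-\chi\bar U f<0$. Then there exists a constant $C_1\ge1$ depending only on $k,\bar U,D,\mu,f,\chi$ (and $d$) such that for every initial datum $\mathbf w(\cdot,0)\in[L^2((0,\pi)^d)]^2$, the solution $\mathbf w(\cdot,t)=e^{\mathcal L t}\mathbf w(\cdot,0)$ of the linearized Keller–Segel system satisfies $$\|\mathbf w(\cdot,t)\|\le C_1e^{\lambda_{\max}t}\|\mathbf w(\cdot,0)\|\quad\text{for all }t\ge0.$$
   Context: Fix $d\in\{1,2,3\}$ and constants $\mu,\chi,D,f,k,\bar U>0$. The linearized Keller–Segel system is $u_t=\mu\Delta u-\chi\bar U\Delta v$, $v_t=D\Delta v+fu-kv$ on $(0,\pi)^d$ with Neumann boundary conditions $\partial_{x_i}u=\partial_{x_i}v=0$ at $x_i\in\{0,\pi\}$. Let $\Omega=(\mathbb N\cup\{0\})^d$, $e_{\mathbf q}(x)=\prod_{i=1}^d\cos(q_ix_i)$, $q^2=\sum_iq_i^2$. For each $\mathbf q$ let $\lambda_-(\mathbf q)<\lambda_+(\mathbf q)$ be the roots of $\lambda^2+\{q^2(\mu+D)+k\}\lambda+q^2\{\mu(Dq^2+k)-\chi\bar Uf\}=0$ and $\mathbf r_\pm(\mathbf q)=\big[\frac{\lambda_\pm(\mathbf q)+Dq^2+k}{f},1\big]$. Writing $\mathbf w(\cdot,0)=\sum_{\mathbf q}\{w^-_{\mathbf q}\mathbf r_-(\mathbf q)+w^+_{\mathbf q}\mathbf r_+(\mathbf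 q)\}e_{\mathbf q}$, the solution operator is $e^{\mathcal Lt}\mathbf w(\cdot,0)=\sum_{\mathbf q}\{w^-_{\mathbf q}\mathbf r_-(\mathbf q)e^{\lambda_-(\mathbf q)t}+w^+_{\mathbf q}\mathbf r_+(\mathbf q)e^{\lambda_+(\mathbf q)t}\}e_{\mathbf q}$. $\lambda_{\max}=\max_{\mathbf q\in\Omega}\lambda_+(\mathbf q)$. $\|\cdot\|$ is the $L^2((0,\pi)^d)$ norm. *)

theory Defs
  imports "HOL-Analysis.Analysis"
begin

definition cube :: "(real^'d::finite) set" where
  "cube = {x. \<forall>i. 0 < x$i \<and> x$i < pi}"

text \<open>Wave vectors q in Omega = (N u {0})^d are functions 'd => nat.\<close>
definition qsq :: "('d::finite \<Rightarrow> nat) \<Rightarrow> real" where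
  "qsq q = (\<Sum>i\<in>UNIV. (real (q i))^2)"

definition eq :: "('d::finite \<Rightarrow> nat) \<Rightarrow> real^'d \<Rightarrow> real" where
  "eq q x = (\<Prod>i\<in>UNIV. cos (real (q i) * x$i))"

definition L2 :: "(real^'d::finite \<Rightarrow> real) \<Rightarrow> bool" where
  "L2 g \<longleftrightarrow> g \<in> borel_measurable (lebesgue_on (cube::(real^'d) set)) \<and>
     integrable (lebesgue_on (cube::(real^'d) set)) (\<lambda>x. (g x)^2)"

definition L2norm :: "(real^'d::finite \<Rightarrow> real) \<Rightarrow> (real^'d \<Rightarrow> real) \<Rightarrow> real" where
  "L2norm u v = sqrt (integral\<^sup>L (lebesgue_on (cube::(real^'d) set)) (\<lambda>x. (u x)^2 + (v x)^2))"

text \<open>Cosine (Fourier) coefficient of g against e_q (unnormalised inner product).\<close>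
definition coeff :: "(real^'d::finite \<Rightarrow> real) \<Rightarrow> ('d \<Rightarrow> nat) \<Rightarrow> real" where
  "coeff g q = integral\<^sup>L (lebesgue_on (cube::(real^'d) set)) (\<lambda>x. g x * eq q x)"

text \<open>The roots lambda_-(q) < lambda_+(q) of
  lambda^2 + (q^2(mu+D)+k) lambda + q^2(mu(D q^2+k) - chi U f) = 0.\<close>
definition lam_minus :: "real \<Rightarrow> real \<Rightarrow> real \<Rightarrow> real \<Rightarrow> real \<Rightarrow> real \<Rightarrow> ('d::finite \<Rightarrow> nat) \<Rightarrow> real" where
  "lam_minus mu chi D f k U q =
     (let B = qsq q * (mu + D) + k; C = qsq q * (mu * (D * qsq q + k) - chi * U * f)
      in (- B - sqrt (B^2 - 4 * C)) / 2)"

definition lam_plus :: "real \<Rightarrow> real \<Rightarrow> real \<Rightarrow> real \<Rightarrow> real \<Rightarrow> real \<Rightarrow> ('d::finite \<Rightarrow> nat) \<Rightarrow> real" where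
  "lam_plus mu chi D f k U q =
     (let B = qsq q * (mu + D) + k; C = qsq q * (mu * (D * qsq q + k) - chi * U * f)
      in (- B + sqrt (B^2 - 4 * C)) / 2)"

text \<open>lambda_max = max over Omega of lambda_+ (the max is attained).\<close>
definition lam_max :: "real \<Rightarrow> real \<Rightarrow> real \<Rightarrow> real \<Rightarrow> real \<Rightarrow> real \<Rightarrow> 'd::finite itself \<Rightarrow> real" where
  "lam_max mu chi D f k U (TYPE('d)) = (SUP q\<in>(UNIV::('d \<Rightarrow> nat) set). lam_plus mu chi D f k U q)"

text \<open>First component of the eigenvector r_(+/-)(q) = [(lambda + D q^2 + k)/f, 1].\<close>
definition rfirst :: "real \<Rightarrow> real \<Rightarrow> real \<Rightarrow> real \<Rightarrow> ('d::finite \<Rightarrow> nat) \<Rightarrow> real" where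
  "rfirst D f k lam q = (lam + D * qsq q + k) / f"

text \<open>(u,v) is the solution e^{Lt} w(.,0) with w(.,0) = (u0,v0):
  the cosine coefficients of w(.,0) are wm_q r_-(q) + wp_q r_+(q), and those of w(.,t)
  are wm_q r_-(q) e^{lambda_- t} + wp_q r_+(q) e^{lambda_+ t}, for all t >= 0.
  (Coefficients are taken w.r.t. the unnormalised inner product with e_q; the
  normalisation factor is a common positive constant per q and is absorbed in wm, wp.)\<close>
definition ks_solution ::
  "real \<Rightarrow> real \<Rightarrow> real \<Rightarrow> real \<Rightarrow> real \<Rightarrow> real \<Rightarrow> (real^'d::finite \<Rightarrow> real) \<Rightarrow> (real^'d \<Rightarrow> real)
   \<Rightarrow> (real \<Rightarrow> real^'d \<Rightarrow> real) \<Rightarrow> (real \<Rightarrow> real^'d \<Rightarrow> real) \<Rightarrow> bool" where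
  "ks_solution mu chi D f k U u0 v0 u v \<longleftrightarrow>
    (\<exists>wm wp :: ('d \<Rightarrow> nat) \<Rightarrow> real. \<forall>q.
       (let lm = lam_minus mu chi D f k U q; lp = lam_plus mu chi D f k U q in
        coeff u0 q = wm q * rfirst D f k lm q + wp q * rfirst D f k lp q \<and>
        coeff v0 q = wm q + wp q \<and>
        (\<forall>t\<ge>0. coeff (u t) q = wm q * rfirst D f k lm q * exp (lm * t)
                              + wp q * rfirst D f k lp q * exp (lp * t) \<and>
               coeff (v t) q = wm q * exp (lm * t) + wp q * exp (lp * t))))"

end

(* The cosine modes decouple the system: the coefficients (a, b) of e_q in (u, v) solve
   a' = -mu q^2 a + chi U q^2 b,  b' = f a - (D q^2 + k) b,  a 2x2 system A_q with eigenvalues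
   lambda_-(q) < lambda_+(q) <= lambda_max.  In the Putzer form of its propagator,
     e^(A_q t) = e^(lambda_- t) I + y (A_q - lambda_- I),
     y = (e^(lambda_+ t) - e^(lambda_- t)) / (lambda_+ - lambda_-),
   the divided difference y is at most 4 e^(lambda_max t) / (q^2 (mu + D) + k), which absorbs the
   growth in q of the entries of A_q - lambda_- I; hence every entry of e^(A_q t) is bounded by
   C e^(lambda_max t) with C independent of q.  The e_q form a complete orthogonal system of
   L^2((0,pi)^d): orthogonality is a product of one-dimensional integrals, completeness follows
   from Stone-Weierstrass on the closed cube and the density of bounded continuous functions
   in L^2.  Parseval's identity sums the modal bounds to the L^2 estimate with C_1 = 2 C. *)

theory Submission
  imports Defs
begin

section \<open>Orthogonality of the cosine modes\<close>

lemma LBINT_cos_int_mult: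
  "(LBINT y=ereal 0..ereal pi. cos (real_of_int n * y)) = (if n = 0 then pi else 0)"
proof (cases "n = 0")
  case False
  have "(LBINT y=ereal 0..ereal pi. cos (real_of_int n * y))
          = sin (real_of_int n * pi) / real_of_int n - sin (real_of_int n * 0) / real_of_int n"
  proof (rule interval_integral_FTC_finite)
    show "continuous_on {min 0 pi..max 0 pi} (\<lambda>y. cos (real_of_int n * y))"
      by (intro continuous_intros)
    show "((\<lambda>y. sin (real_of_int n * y) / real_of_int n) has_vector_derivative cos (real_of_int n * y))
            (at y within {min 0 pi..max 0 pi})" for y
      using False
      by (auto intro!: derivative_eq_intros simp flip: has_real_derivative_iff_has_vector_derivative)
  qed
  also have "\<dots> = 0" by (simp add: sin_zero_iff_int2)
  finally show ?thesis using False by simp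
qed simp

lemma LBINT_cos_mult_cos:
  "(LBINT y=ereal 0..ereal pi. cos (real a * y) * cos (real b * y))
     = (if a = b then (if a = 0 then pi else pi / 2) else 0)"
proof -
  have int: "interval_lebesgue_integrable lborel (ereal 0) (ereal pi) (\<lambda>y. cos (r * y) / 2)" for r
    by (intro interval_integrable_isCont continuous_intros) simp
  have "cos (real a * y) * cos (real b * y)
      = cos ((real a - real b) * y) / 2 + cos ((real a + real b) * y) / 2" for y by (simp add: cos_times_cos algebra_simps)
  then have "(LBINT y=ereal 0..ereal pi. cos (real a * y) * cos (real b * y))
      = (LBINT y=ereal 0..ereal pi. cos ((real a - real b) * y) / 2 + cos ((real a + real b) * y) / 2)"
    by simp
  also have "\<dots> = (LBINT y=ereal 0..ereal pi. cos ((real a - real b) * y)) / 2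
        + (LBINT y=ereal 0..ereal pi. cos ((real a + real b) * y)) / 2"
    using interval_lebesgue_integral_add(2)[OF int int] by simp
  also have "\<dots> = (if a = b then pi else 0) / 2 + (if a + b = 0 then pi else 0) / 2"
    using LBINT_cos_int_mult[of "int a - int b"] LBINT_cos_int_mult[of "int a + int b"] by simp
  also have "\<dots> = (if a = b then (if a = 0 then pi else pi / 2) else 0)" by auto
  finally show ?thesis .
qed

lemma integral_lborel_prod:
  fixes f :: "'a::euclidean_space \<Rightarrow> real \<Rightarrow> real"
  assumes [measurable]: "\<And>b. b \<in> Basis \<Longrightarrow> f b \<in> borel_measurable borel"
    and int: "\<And>b. b \<in> Basis \<Longrightarrow> integrable lborel (f b)"
  shows "(\<integral>x. (\<Prod>b\<in>Basis. f b (x \<bullet> b)) \<partial>lborel) = (\<Prod>b\<in>Basis. (\<integral>x. f b x \<partial>lborel))"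
proof -
  interpret product_sigma_finite "\<lambda>_. lborel" by unfold_locales
  have "(\<lambda>g. \<Sum>b\<in>Basis. g b *\<^sub>R b) \<in> measurable (\<Pi>\<^sub>M b\<in>Basis. lborel) (borel :: 'a measure)"
    by measurable
  then have "(\<integral>x. (\<Prod>b\<in>Basis. f b (x \<bullet> b)) \<partial>lborel) =
        (\<integral>g. (\<Prod>b\<in>Basis. f b ((\<Sum>c\<in>Basis. g c *\<^sub>R c) \<bullet> b)) \<partial>(\<Pi>\<^sub>M b\<in>Basis. lborel))"
    by (subst lborel_eq) (rule integral_distr, measurable)
  also have "\<dots> = (\<integral>g. (\<Prod>b\<in>Basis. f b (g b)) \<partial>(\<Pi>\<^sub>M b\<in>Basis. lborel))"
    by (intro Bochner_Integration.integral_cong refl prod.cong)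
       (simp add: inner_sum_left inner_Basis if_distrib sum.delta cong: if_cong)
  also have "\<dots> = (\<Prod>b\<in>Basis. (\<integral>x. f b x \<partial>lborel))"
    by (rule product_integral_prod) (auto intro: int)
  finally show ?thesis .
qed

lemma integral_lborel_cart_prod:
  fixes f :: "'n::finite \<Rightarrow> real \<Rightarrow> real"
  assumes "\<And>i. f i \<in> borel_measurable borel" and "\<And>i. integrable lborel (f i)"
  shows "(\<integral>x. (\<Prod>i\<in>UNIV. f i (x $ i)) \<partial>(lborel :: (real^'n) measure)) = (\<Prod>i\<in>UNIV. (\<integral>y. f i y \<partial>lborel))"
proof -
  define ax :: "'n \<Rightarrow> real^'n" where "ax i = axis i 1" for i
  have inj: "inj ax" by (auto simp: inj_def ax_def axis_eq_axis)
  have Basis: "Basis = range ax" by (auto simp: ax_def Basis_vec_def)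
  have inner_ax: "x \<bullet> ax i = x $ i" for x :: "real^'n" and i by (simp add: ax_def cart_eq_inner_axis)
  have "(\<integral>x. (\<Prod>i\<in>UNIV. f i (x $ i)) \<partial>(lborel :: (real^'n) measure))
      = (\<integral>x. (\<Prod>b\<in>Basis. f (inv ax b) (x \<bullet> b)) \<partial>lborel)"
    unfolding Basis by (subst prod.reindex[OF inj]) (simp add: inv_f_f[OF inj] inner_ax)
  also have "\<dots> = (\<Prod>b\<in>Basis. (\<integral>y. f (inv ax b) y \<partial>lborel))"
    by (rule integral_lborel_prod) (use assms in auto)
  also have "\<dots> = (\<Prod>i\<in>UNIV. (\<integral>y. f i y \<partial>lborel))"
    unfolding Basis by (subst prod.reindex[OF inj]) (simp add: inv_f_f[OF inj])
  finally show ?thesis .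
qed

abbreviation cube_measure :: "(real^'d::finite) measure" where
  "cube_measure \<equiv> lebesgue_on cube"

lemma cube_eq_box: "cube = box 0 (\<chi> i. pi)"
  by (auto simp: cube_def mem_box_cart)

lemma cube_subset_cbox: "cube \<subseteq> cbox 0 (\<chi> i. pi)"
  by (auto simp: cube_def mem_box_cart less_imp_le)

lemma open_cube: "open cube"
  by (simp add: cube_eq_box open_box)

lemma cube_lmeasurable: "cube \<in> lmeasurable"
  by (simp add: cube_eq_box)

lemma sets_lebesgue_cube: "cube \<in> sets lebesgue"
  by (simp add: cube_eq_box)

lemma finite_measure_cube: "finite_measure cube_measure"
  by (rule finite_measure_lebesgue_on[OF cube_lmeasurable])

lemma indicator_cube: "indicator cube x = (\<Prod>i\<in>UNIV. indicator {0<..<pi} (x $ i) :: real)"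
  by (auto simp: cube_def indicator_def prod_zero)

lemma integral_cube_prod:
  fixes \<phi> :: "'d::finite \<Rightarrow> real \<Rightarrow> real"
  assumes cont: "\<And>i. continuous_on UNIV (\<phi> i)"
  shows "integral\<^sup>L cube_measure (\<lambda>x. \<Prod>i\<in>UNIV. \<phi> i (x $ i))
           = (\<Prod>i\<in>UNIV. LBINT y=ereal 0..ereal pi. \<phi> i y)"
proof -
  define \<psi> where "\<psi> i y = indicator {0<..<pi} y * \<phi> i y" for i y
  have [measurable]: "\<phi> i \<in> borel_measurable borel" for i
    using cont by (rule borel_measurable_continuous_onI)
  have [measurable]: "cube \<in> sets (borel :: (real^'d) measure)"
    by (simp add: open_cube)
  have "interval_lebesgue_integrable lborel (ereal 0) (ereal pi) (\<phi> i)" for i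
    using cont by (intro interval_integrable_isCont) (simp add: continuous_on_eq_continuous_at)
  then have int: "integrable lborel (\<psi> i)" for i
    by (simp add: interval_lebesgue_integrable_def set_integrable_def \<psi>_def[abs_def])
  have [measurable]: "\<psi> i \<in> borel_measurable borel" for i
    unfolding \<psi>_def by measurable
  have "integral\<^sup>L cube_measure (\<lambda>x. \<Prod>i\<in>UNIV. \<phi> i (x $ i))
      = integral\<^sup>L lebesgue (\<lambda>x. indicator cube x *\<^sub>R (\<Prod>i\<in>UNIV. \<phi> i (x $ i)))"
    by (rule integral_restrict_space) (simp add: sets_lebesgue_cube)
  also have "\<dots> = integral\<^sup>L lborel (\<lambda>x. indicator cube x *\<^sub>R (\<Prod>i\<in>UNIV. \<phi> i (x $ i)))"
    by (rule integral_completion) measurable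
  also have "\<dots> = integral\<^sup>L lborel (\<lambda>x::real^'d. \<Prod>i\<in>UNIV. \<psi> i (x $ i))"
    by (simp add: indicator_cube \<psi>_def prod.distrib)
  also have "\<dots> = (\<Prod>i\<in>UNIV. integral\<^sup>L lborel (\<psi> i))"
    by (rule integral_lborel_cart_prod) (simp_all add: int)
  also have "\<dots> = (\<Prod>i\<in>UNIV. LBINT y=ereal 0..ereal pi. \<phi> i y)"
    by (simp add: interval_lebesgue_integral_def set_lebesgue_integral_def \<psi>_def[abs_def])
  finally show ?thesis .
qed

definition eq_norm_sq :: "('d::finite \<Rightarrow> nat) \<Rightarrow> real" where
  "eq_norm_sq q = (\<Prod>i\<in>UNIV. if q i = 0 then pi else pi / 2)"

lemma eq_norm_sq_pos: "0 < eq_norm_sq q"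
  unfolding eq_norm_sq_def by (rule prod_pos) auto

lemma continuous_on_eq: "continuous_on S (eq q)"
  unfolding eq_def[abs_def] by (intro continuous_intros)

lemma abs_eq_le_1: "\<bar>eq q x\<bar> \<le> 1"
  unfolding eq_def abs_prod by (rule prod_le_1) auto

lemma integral_eq_mult_eq:
  "integral\<^sup>L cube_measure (\<lambda>x. eq q x * eq q' x) = (if q = q' then eq_norm_sq q else 0)"
proof -
  have "integral\<^sup>L cube_measure (\<lambda>x. eq q x * eq q' x)
      = (\<Prod>i\<in>UNIV. LBINT y=ereal 0..ereal pi. cos (real (q i) * y) * cos (real (q' i) * y))"
    unfolding eq_def prod.distrib[symmetric] by (rule integral_cube_prod) (intro continuous_intros)
  also have "\<dots> = (\<Prod>i\<in>UNIV. if q i = q' i then (if q i = 0 then pi else pi / 2) else 0)"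
    by (simp add: LBINT_cos_mult_cos)
  also have "\<dots> = (if q = q' then eq_norm_sq q else 0)"
    by (force simp: eq_norm_sq_def intro: prod_zero)
  finally show ?thesis .
qed

section \<open>Bessel's inequality and Parseval's identity\<close>

abbreviation sq_integral :: "(real^'d::finite \<Rightarrow> real) \<Rightarrow> real" where
  "sq_integral g \<equiv> integral\<^sup>L cube_measure (\<lambda>x. (g x)\<^sup>2)"

lemma sq_integral_nonneg: "0 \<le> sq_integral g"
  by (rule Bochner_Integration.integral_nonneg) simp

lemma borel_measurable_cube_continuous:
  "continuous_on UNIV h \<Longrightarrow> h \<in> borel_measurable (cube_measure :: (real^'d::finite) measure)"
  by (rule continuous_imp_measurable_on_sets_lebesgue[OF continuous_on_subset])
     (auto simp: sets_lebesgue_cube)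

lemma measurable_eq [measurable]: "eq q \<in> borel_measurable cube_measure"
  by (rule borel_measurable_cube_continuous[OF continuous_on_eq])

lemma L2_bounded:
  assumes "f \<in> borel_measurable (cube_measure :: (real^'d::finite) measure)" and "\<And>x. \<bar>f x\<bar> \<le> B"
  shows "L2 f"
proof -
  interpret finite_measure "cube_measure :: (real^'d) measure" by (rule finite_measure_cube)
  have "integrable cube_measure (\<lambda>x. (f x)\<^sup>2)"
  proof (rule integrable_const_bound[where B = "B\<^sup>2"])
    show "AE x in cube_measure. norm ((f x)\<^sup>2) \<le> B\<^sup>2"
    proof (intro AE_I2)
      fix x
      have "\<bar>f x\<bar>\<^sup>2 \<le> B\<^sup>2" using assms(2)[of x] by (intro power_mono) auto
      then show "norm ((f x)\<^sup>2) \<le> B\<^sup>2" by simp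
    qed
  qed (use assms(1) in measurable)
  then show ?thesis using assms(1) by (simp add: L2_def)
qed

lemma L2_integrable_mult:
  fixes g h :: "real^'d::finite \<Rightarrow> real"
  assumes g: "L2 g" and h: "L2 h"
  shows "integrable cube_measure (\<lambda>x. g x * h x)"
proof (rule Bochner_Integration.integrable_bound[where f = "\<lambda>x. ((g x)\<^sup>2 + (h x)\<^sup>2) / 2"])
  show "integrable cube_measure (\<lambda>x. ((g x)\<^sup>2 + (h x)\<^sup>2) / 2)"
    using g h by (simp add: L2_def)
  show "(\<lambda>x. g x * h x) \<in> borel_measurable cube_measure"
    using g h unfolding L2_def by (auto intro: borel_measurable_times)
  show "AE x in cube_measure. norm (g x * h x) \<le> norm (((g x)\<^sup>2 + (h x)\<^sup>2) / 2)"
  proof (intro AE_I2)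
    fix x
    have "\<bar>g x * h x\<bar> \<le> ((g x)\<^sup>2 + (h x)\<^sup>2) / 2"
      using zero_le_power2[of "\<bar>g x\<bar> - \<bar>h x\<bar>"] by (simp add: abs_mult power2_eq_square algebra_simps)
    then show "norm (g x * h x) \<le> norm (((g x)\<^sup>2 + (h x)\<^sup>2) / 2)" by simp
  qed
qed

lemma L2_eq: "L2 (eq q)"
  by (rule L2_bounded[OF measurable_eq abs_eq_le_1])

lemma L2_diff:
  assumes g: "L2 g" and h: "L2 h"
  shows "L2 (\<lambda>x. g x - h x)"
proof -
  have "(\<lambda>x. (g x - h x)\<^sup>2) = (\<lambda>x. (g x)\<^sup>2 + (h x)\<^sup>2 - 2 * (g x * h x))"
    by (simp add: power2_diff mult.assoc)
  moreover have "(\<lambda>x. g x - h x) \<in> borel_measurable cube_measure"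
    using g h unfolding L2_def by (auto intro: borel_measurable_diff)
  ultimately show ?thesis
    using g h L2_integrable_mult[OF g h] by (simp add: L2_def)
qed

lemma sq_integral_diff_le:
  assumes g: "L2 g" and h: "L2 h" and p: "L2 p"
  shows "sq_integral (\<lambda>x. g x - p x) \<le> 2 * sq_integral (\<lambda>x. g x - h x) + 2 * sq_integral (\<lambda>x. h x - p x)"
proof -
  have "sq_integral (\<lambda>x. g x - p x)
      \<le> integral\<^sup>L cube_measure (\<lambda>x. 2 * (g x - h x)\<^sup>2 + 2 * (h x - p x)\<^sup>2)"
  proof (rule integral_mono)
    show "integrable cube_measure (\<lambda>x. (g x - p x)\<^sup>2)" using L2_diff[OF g p] by (simp add: L2_def)
    show "integrable cube_measure (\<lambda>x. 2 * (g x - h x)\<^sup>2 + 2 * (h x - p x)\<^sup>2)"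
      using L2_diff[OF g h] L2_diff[OF h p] by (simp add: L2_def)
    show "(g x - p x)\<^sup>2 \<le> 2 * (g x - h x)\<^sup>2 + 2 * (h x - p x)\<^sup>2" for x
      using zero_le_power2[of "g x - 2 * h x + p x"] by (simp add: power2_eq_square algebra_simps)
  qed
  also have "\<dots> = 2 * sq_integral (\<lambda>x. g x - h x) + 2 * sq_integral (\<lambda>x. h x - p x)"
    using L2_diff[OF g h] L2_diff[OF h p] by (simp add: L2_def)
  finally show ?thesis .
qed

definition cos_sum :: "('d::finite \<Rightarrow> nat) set \<Rightarrow> (('d \<Rightarrow> nat) \<Rightarrow> real) \<Rightarrow> real^'d \<Rightarrow> real" where
  "cos_sum F c x = (\<Sum>q\<in>F. c q * eq q x)"

lemma sq_integral_sub_cos_sum: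
  assumes g: "L2 g" and F: "finite F"
  shows "sq_integral (\<lambda>x. g x - cos_sum F c x)
           = sq_integral g - 2 * (\<Sum>q\<in>F. c q * coeff g q) + (\<Sum>q\<in>F. (c q)\<^sup>2 * eq_norm_sq q)"
proof -
  define A where "A q x = c q * (g x * eq q x)" for q x
  define B where "B q q' x = c q * c q' * (eq q x * eq q' x)" for q q' x
  have intA: "integrable cube_measure (A q)" for q
    unfolding A_def by (intro Bochner_Integration.integrable_mult_right L2_integrable_mult[OF g L2_eq])
  have intB: "integrable cube_measure (B q q')" for q q'
    unfolding B_def by (intro Bochner_Integration.integrable_mult_right L2_integrable_mult[OF L2_eq L2_eq])
  have "(g x - cos_sum F c x)\<^sup>2 = (g x)\<^sup>2 - 2 * (\<Sum>q\<in>F. A q x) + (\<Sum>q\<in>F. \<Sum>q'\<in>F. B q q' x)" for x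
  proof -
    have "(cos_sum F c x)\<^sup>2 = (\<Sum>q\<in>F. \<Sum>q'\<in>F. B q q' x)"
      by (simp add: cos_sum_def B_def power2_eq_square sum_product mult_ac)
    moreover have "g x * cos_sum F c x = (\<Sum>q\<in>F. A q x)"
      by (simp add: cos_sum_def A_def sum_distrib_left mult_ac)
    ultimately show ?thesis by (simp add: power2_diff)
  qed
  then have "sq_integral (\<lambda>x. g x - cos_sum F c x)
      = sq_integral g - 2 * (\<Sum>q\<in>F. integral\<^sup>L cube_measure (A q))
          + (\<Sum>q\<in>F. \<Sum>q'\<in>F. integral\<^sup>L cube_measure (B q q'))"
    using g intA intB
    by (simp add: L2_def Bochner_Integration.integral_sum Bochner_Integration.integrable_sum)
  also have "\<dots> = sq_integral g - 2 * (\<Sum>q\<in>F. c q * coeff g q) + (\<Sum>q\<in>F. (c q)\<^sup>2 * eq_norm_sq q)"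
    using F by (simp add: A_def[abs_def] B_def[abs_def] coeff_def integral_eq_mult_eq power2_eq_square
        if_distrib sum.delta cong: if_cong)
  finally show ?thesis .
qed

lemma bessel_inequality:
  fixes g :: "real^'d::finite \<Rightarrow> real"
  assumes g: "L2 g" and F: "finite F"
  shows "(\<Sum>q\<in>F. (coeff g q)\<^sup>2 / eq_norm_sq q) \<le> sq_integral g"
proof -
  have N: "0 < eq_norm_sq q" for q :: "'d \<Rightarrow> nat" by (rule eq_norm_sq_pos)
  define c where "c q = coeff g q / eq_norm_sq q" for q
  have "0 \<le> sq_integral (\<lambda>x. g x - cos_sum F c x)" by (rule sq_integral_nonneg)
  also have "\<dots> = sq_integral g - (\<Sum>q\<in>F. (coeff g q)\<^sup>2 / eq_norm_sq q)"
  proof -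
    have "(\<Sum>q\<in>F. c q * coeff g q) = (\<Sum>q\<in>F. (coeff g q)\<^sup>2 / eq_norm_sq q)"
      by (simp add: c_def power2_eq_square)
    moreover have "(\<Sum>q\<in>F. (c q)\<^sup>2 * eq_norm_sq q) = (\<Sum>q\<in>F. (coeff g q)\<^sup>2 / eq_norm_sq q)"
      using N by (intro sum.cong) (simp_all add: c_def power2_eq_square)
    ultimately show ?thesis unfolding sq_integral_sub_cos_sum[OF g F] by simp
  qed
  finally show ?thesis by simp
qed

lemma sq_integral_le_bessel_sum:
  fixes g :: "real^'d::finite \<Rightarrow> real"
  assumes g: "L2 g" and F: "finite F"
  shows "sq_integral g \<le> (\<Sum>q\<in>F. (coeff g q)\<^sup>2 / eq_norm_sq q) + sq_integral (\<lambda>x. g x - cos_sum F c x)"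
proof -
  have N: "0 < eq_norm_sq q" for q :: "'d \<Rightarrow> nat" by (rule eq_norm_sq_pos)
  have "2 * (c q * coeff g q) - (c q)\<^sup>2 * eq_norm_sq q \<le> (coeff g q)\<^sup>2 / eq_norm_sq q" for q
  proof -
    have "0 \<le> (coeff g q - c q * eq_norm_sq q)\<^sup>2 / eq_norm_sq q" using N[of q] by simp
    also have "\<dots> = (coeff g q)\<^sup>2 / eq_norm_sq q - (2 * (c q * coeff g q) - (c q)\<^sup>2 * eq_norm_sq q)"
      using N[of q] by (simp add: power2_eq_square field_simps)
    finally show ?thesis by simp
  qed
  then have "2 * (\<Sum>q\<in>F. c q * coeff g q) - (\<Sum>q\<in>F. (c q)\<^sup>2 * eq_norm_sq q)
      \<le> (\<Sum>q\<in>F. (coeff g q)\<^sup>2 / eq_norm_sq q)"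
    by (simp add: sum_distrib_left sum_subtractf[symmetric] sum_mono)
  then show ?thesis unfolding sq_integral_sub_cos_sum[OF g F] by linarith
qed

definition cos_poly :: "(real^'d::finite \<Rightarrow> real) \<Rightarrow> bool" where
  "cos_poly p \<longleftrightarrow> (\<exists>F c. finite F \<and> p = cos_sum F c)"

lemma cos_poly_eq: "cos_poly (eq q)"
  unfolding cos_poly_def cos_sum_def by (intro exI[of _ "{q}"] exI[of _ "\<lambda>_. 1"]) auto

lemma cos_poly_const: "cos_poly (\<lambda>_. a)"
  unfolding cos_poly_def cos_sum_def
  by (intro exI[of _ "{\<lambda>_. 0}"] exI[of _ "\<lambda>_. a"]) (auto simp: eq_def)

lemma cos_sum_extend:
  assumes "finite G" "F \<subseteq> G"
  shows "cos_sum F c = cos_sum G (\<lambda>q. if q \<in> F then c q else 0)"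
  unfolding cos_sum_def fun_eq_iff using assms by (auto intro: sum.mono_neutral_cong_left)

lemma cos_poly_add:
  assumes "cos_poly p" "cos_poly p'" shows "cos_poly (\<lambda>x. p x + p' x)"
proof -
  obtain F c G d where F: "finite F" "p = cos_sum F c" and G: "finite G" "p' = cos_sum G d"
    using assms by (auto simp: cos_poly_def)
  have "cos_sum F c = cos_sum (F \<union> G) (\<lambda>q. if q \<in> F then c q else 0)"
    and "cos_sum G d = cos_sum (F \<union> G) (\<lambda>q. if q \<in> G then d q else 0)"
    using F G by (intro cos_sum_extend; simp)+
  then have "(\<lambda>x. p x + p' x)
      = cos_sum (F \<union> G) (\<lambda>q. (if q \<in> F then c q else 0) + (if q \<in> G then d q else 0))"
    unfolding F(2) G(2) by (simp add: cos_sum_def fun_eq_iff distrib_right sum.distrib)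
  then show ?thesis using F G by (auto simp: cos_poly_def)
qed

lemma cos_poly_cmult:
  assumes "cos_poly p" shows "cos_poly (\<lambda>x. a * p x)"
proof -
  obtain F c where "finite F" "p = cos_sum F c" using assms by (auto simp: cos_poly_def)
  then show ?thesis unfolding cos_poly_def cos_sum_def
    by (intro exI[of _ F] exI[of _ "\<lambda>q. a * c q"]) (simp add: sum_distrib_left mult.assoc)
qed

lemma cos_poly_sum:
  "finite A \<Longrightarrow> (\<And>i. i \<in> A \<Longrightarrow> cos_poly (p i)) \<Longrightarrow> cos_poly (\<lambda>x. \<Sum>i\<in>A. p i x)"
  by (induction A rule: finite_induct) (auto intro: cos_poly_add cos_poly_const[of 0, simplified])

lemma cos_poly_prod_cos_add_cos:
  "cos_poly (\<lambda>x::real^'d::finite. \<Prod>i\<in>UNIV. cos (real (a i) * x $ i) + cos (real (b i) * x $ i))"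
proof -
  have "(\<Prod>i\<in>UNIV. cos (real (a i) * x $ i) + cos (real (b i) * x $ i))
      = (\<Sum>X\<in>Pow UNIV. eq (\<lambda>i. if i \<in> X then a i else b i) x)" for x :: "real^'d"
  proof -
    have "eq (\<lambda>i. if i \<in> X then a i else b i) x
        = (\<Prod>i\<in>UNIV. if i \<in> X then cos (real (a i) * x $ i) else cos (real (b i) * x $ i))" for X
      unfolding eq_def by (intro prod.cong) auto
    also have "\<dots> X = (\<Prod>i\<in>X. cos (real (a i) * x $ i)) * (\<Prod>i\<in>UNIV - X. cos (real (b i) * x $ i))" for X
      by (simp add: prod.If_cases Compl_eq_Diff_UNIV)
    finally have "(\<Prod>i\<in>X. cos (real (a i) * x $ i)) * (\<Prod>i\<in>UNIV - X. cos (real (b i) * x $ i))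
        = eq (\<lambda>i. if i \<in> X then a i else b i) x" for X ..
    then show ?thesis by (simp add: prod_add)
  qed
  then show ?thesis by (simp add: cos_poly_sum cos_poly_eq)
qed

lemma cos_poly_eq_mult_eq:
  fixes q q' :: "'d::finite \<Rightarrow> nat"
  shows "cos_poly (\<lambda>x. eq q x * eq q' x)"
proof -
  define a b where "a i = q i + q' i" and "b i = max (q i) (q' i) - min (q i) (q' i)" for i
  have cc: "cos (real (q i) * y) * cos (real (q' i) * y)
      = (cos (real (a i) * y) + cos (real (b i) * y)) / 2"
    for i y
  proof -
    have "cos (real (q i) * y - real (q' i) * y) = cos (real (b i) * y)"
      by (cases "q' i \<le> q i")
         (simp_all add: b_def of_nat_diff left_diff_distrib
            cos_minus[of "real (q i) * y - _", symmetric])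
    then show ?thesis by (simp add: cos_times_cos a_def distrib_right add.commute)
  qed
  then have "eq q x * eq q' x = (\<Prod>i\<in>UNIV. (cos (real (a i) * x $ i) + cos (real (b i) * x $ i)) / 2)"
    for x by (simp only: eq_def prod.distrib[symmetric] cc)
  then have "eq q x * eq q' x
      = (1 / 2) ^ CARD('d) * (\<Prod>i\<in>UNIV. cos (real (a i) * x $ i) + cos (real (b i) * x $ i))" for x
    by (simp add: prod_dividef power_one_over)
  then show ?thesis using cos_poly_cmult[OF cos_poly_prod_cos_add_cos] by simp
qed

lemma cos_poly_mult:
  assumes "cos_poly p" "cos_poly p'" shows "cos_poly (\<lambda>x. p x * p' x)"
proof -
  obtain F c G d where F: "finite F" "p = cos_sum F c" and G: "finite G" "p' = cos_sum G d"
    using assms by (auto simp: cos_poly_def)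
  have "(\<lambda>x. p x * p' x) = (\<lambda>x. \<Sum>q\<in>F. \<Sum>q'\<in>G. (c q * d q') * (eq q x * eq q' x))"
    unfolding F(2) G(2) by (simp add: cos_sum_def sum_product mult_ac)
  then show ?thesis
    using F G by (simp add: cos_poly_sum cos_poly_cmult cos_poly_eq_mult_eq)
qed

lemma continuous_on_cos_sum: "continuous_on S (cos_sum F c)"
  unfolding cos_sum_def[abs_def] by (intro continuous_intros continuous_on_eq)

lemma L2_cos_sum: "L2 (cos_sum F c)"
proof (rule L2_bounded)
  show "cos_sum F c \<in> borel_measurable cube_measure"
    by (rule borel_measurable_cube_continuous[OF continuous_on_cos_sum])
  show "\<bar>cos_sum F c x\<bar> \<le> (\<Sum>q\<in>F. \<bar>c q\<bar>)" for x
    unfolding cos_sum_def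
    by (rule order_trans[OF sum_abs sum_mono]) (simp add: abs_mult mult_left_le abs_eq_le_1)
qed

lemma cos_poly_uniform_approx:
  fixes h :: "real^'d::finite \<Rightarrow> real"
  assumes h: "continuous_on (cbox 0 (\<chi> i. pi)) h" and e: "e > 0"
  shows "\<exists>p. cos_poly p \<and> (\<forall>x\<in>cbox 0 (\<chi> i. pi). \<bar>h x - p x\<bar> < e)"
proof -
  interpret function_ring_on "Collect cos_poly" "cbox 0 (\<chi> i. pi :: real^'d)"
  proof unfold_locales
    show "continuous_on (cbox 0 (\<chi> i. pi)) p" if "p \<in> Collect cos_poly" for p
      using that by (auto simp: cos_poly_def continuous_on_cos_sum)
    show "(\<lambda>x. p x + p' x) \<in> Collect cos_poly" "(\<lambda>x. p x * p' x) \<in> Collect cos_poly"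
      if "p \<in> Collect cos_poly" "p' \<in> Collect cos_poly" for p p'
      using that by (simp_all add: cos_poly_add cos_poly_mult)
    show "(\<lambda>_. c) \<in> Collect cos_poly" for c by (simp add: cos_poly_const)
  next
    fix x y :: "real^'d"
    assume "x \<in> cbox 0 (\<chi> i. pi)" "y \<in> cbox 0 (\<chi> i. pi)" "x \<noteq> y"
    then obtain i where "x $ i \<noteq> y $ i" "0 \<le> x $ i" "x $ i \<le> pi" "0 \<le> y $ i" "y $ i \<le> pi"
      by (auto simp: mem_box_cart vec_eq_iff)
    then have "cos (x $ i) \<noteq> cos (y $ i)" using cos_inj_pi by blast
    moreover have "eq (\<lambda>j. if j = i then 1 else 0) z = cos (z $ i)" for z :: "real^'d"
    proof -
      have "eq (\<lambda>j. if j = i then 1 else 0) z = (\<Prod>j\<in>UNIV. if j = i then cos (z $ i) else 1)"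
        unfolding eq_def by (intro prod.cong) auto
      then show ?thesis by simp
    qed
    ultimately show "\<exists>p\<in>Collect cos_poly. p x \<noteq> p y"
      using cos_poly_eq[of "\<lambda>j. if j = i then 1 else 0"]
      by (intro bexI[of _ "eq (\<lambda>j. if j = i then 1 else 0)"]) simp_all
  qed simp
  obtain P where P: "P \<in> UNIV \<rightarrow> Collect cos_poly"
    and lim: "uniform_limit (cbox 0 (\<chi> i. pi)) P h sequentially"
    using Stone_Weierstrass[OF h] by blast
  obtain n where "\<forall>x\<in>cbox 0 (\<chi> i. pi). dist (P n x) (h x) < e"
    using uniform_limitD[OF lim e] by (auto simp: eventually_sequentially)
  then show ?thesis using P by (intro exI[of _ "P n"]) (auto simp: dist_real_def abs_minus_commute)
qed

definition clip :: "real \<Rightarrow> real \<Rightarrow> real" where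
  "clip M y = max (- M) (min M y)"

lemma continuous_on_clip: "continuous_on S (clip M)"
  unfolding clip_def[abs_def] by (intro continuous_intros)

lemma abs_clip_le: "0 \<le> M \<Longrightarrow> \<bar>clip M y\<bar> \<le> M"
  by (simp add: clip_def)

lemma clip_eq_self: "\<bar>y\<bar> \<le> M \<Longrightarrow> clip M y = y"
  by (simp add: clip_def)

lemma abs_sub_clip_le: "0 \<le> M \<Longrightarrow> \<bar>y - clip M y\<bar> \<le> \<bar>y\<bar>"
  by (simp add: clip_def)

lemma sq_integral_sub_clip_tendsto:
  fixes g :: "real^'d::finite \<Rightarrow> real"
  assumes g: "L2 g"
  shows "(\<lambda>n. sq_integral (\<lambda>x. g x - clip (real n) (g x))) \<longlonglongrightarrow> 0"
proof -
  have [measurable]: "g \<in> borel_measurable cube_measure" using g by (simp add: L2_def)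
  have [measurable]: "clip M \<in> borel_measurable borel" for M
    by (rule borel_measurable_continuous_onI[OF continuous_on_clip])
  have "(\<lambda>n. sq_integral (\<lambda>x. g x - clip (real n) (g x))) \<longlonglongrightarrow> integral\<^sup>L cube_measure (\<lambda>x::real^'d. 0)"
  proof (rule Bochner_Integration.integral_dominated_convergence[where w = "\<lambda>x. (g x)\<^sup>2"])
    show "integrable cube_measure (\<lambda>x. (g x)\<^sup>2)" using g by (simp add: L2_def)
    show "AE x in cube_measure. (\<lambda>n. (g x - clip (real n) (g x))\<^sup>2) \<longlonglongrightarrow> 0"
    proof (intro AE_I2 tendsto_eventually)
      fix x
      have "(g x - clip (real n) (g x))\<^sup>2 = 0" if "nat \<lceil>\<bar>g x\<bar>\<rceil> \<le> n" for n
        using that by (simp add: clip_eq_self real_nat_ceiling_ge order_trans)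
      then show "\<forall>\<^sub>F n in sequentially. (g x - clip (real n) (g x))\<^sup>2 = 0"
        unfolding eventually_sequentially by blast
    qed
    show "AE x in cube_measure. norm ((g x - clip (real n) (g x))\<^sup>2) \<le> (g x)\<^sup>2" for n
      using abs_sub_clip_le[of "real n"] by (intro AE_I2) (simp add: abs_le_square_iff[symmetric])
  qed measurable
  then show ?thesis by simp
qed

lemma AE_cube_not_in_negligible: "negligible N \<Longrightarrow> AE x in cube_measure. x \<notin> N"
proof -
  assume "negligible N"
  then have "AE x in lebesgue. x \<notin> N"
    by (intro AE_not_in) (simp add: negligible_iff_null_sets)
  then show ?thesis
    by (subst AE_restrict_space_iff) (auto simp: sets_lebesgue_cube elim: AE_mp)
qed

lemma sq_integral_bounded_convergence:
  fixes g :: "real^'d::finite \<Rightarrow> real"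
  assumes [measurable]: "g \<in> borel_measurable cube_measure" "\<And>n. h n \<in> borel_measurable cube_measure"
    and lim: "AE x in cube_measure. (\<lambda>n. h n x) \<longlonglongrightarrow> g x" and bound: "\<And>n x. \<bar>g x - h n x\<bar> \<le> B"
  shows "(\<lambda>n. sq_integral (\<lambda>x. g x - h n x)) \<longlonglongrightarrow> 0"
proof -
  interpret finite_measure "cube_measure :: (real^'d) measure" by (rule finite_measure_cube)
  have "(\<lambda>n. sq_integral (\<lambda>x. g x - h n x)) \<longlonglongrightarrow> integral\<^sup>L cube_measure (\<lambda>x::real^'d. 0)"
  proof (rule Bochner_Integration.integral_dominated_convergence[where w = "\<lambda>x. B\<^sup>2"])
    show "AE x in cube_measure. (\<lambda>n. (g x - h n x)\<^sup>2) \<longlonglongrightarrow> 0"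
      using lim by eventually_elim (auto intro: tendsto_eq_intros)
    show "AE x in cube_measure. norm ((g x - h n x)\<^sup>2) \<le> B\<^sup>2" for n
    proof (intro AE_I2)
      fix x
      have "\<bar>g x - h n x\<bar>\<^sup>2 \<le> B\<^sup>2" using bound by (rule power_mono) simp
      then show "norm ((g x - h n x)\<^sup>2) \<le> B\<^sup>2" by simp
    qed
  qed measurable
  then show ?thesis by simp
qed

lemma bounded_measurable_approx_continuous:
  fixes g :: "real^'d::finite \<Rightarrow> real"
  assumes g: "g \<in> borel_measurable cube_measure" and M: "\<And>x. \<bar>g x\<bar> \<le> M" and e: "e > 0"
  shows "\<exists>h. continuous_on UNIV h \<and> (\<forall>x. \<bar>h x\<bar> \<le> M) \<and> sq_integral (\<lambda>x. g x - h x) < e"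
proof -
  have M0: "0 \<le> M" using M[of 0] by simp
  have "g measurable_on cube"
    using g measurable_on_iff_borel_measurable[OF sets_lebesgue_cube] by blast
  then obtain N gs where N: "negligible N" and gs: "\<And>n. continuous_on UNIV (gs n)"
    and lim: "\<And>x. x \<notin> N \<Longrightarrow> (\<lambda>n. gs n x) \<longlonglongrightarrow> (if x \<in> cube then g x else 0)"
    unfolding measurable_on_def by blast
  define h where "h n x = clip M (gs n x)" for n x
  have h_cont: "continuous_on UNIV (h n)" for n
    unfolding h_def by (rule continuous_on_compose2[OF continuous_on_clip gs]) auto
  have h_bound: "\<bar>h n x\<bar> \<le> M" for n x
    unfolding h_def by (rule abs_clip_le[OF M0])
  have "AE x in cube_measure. (\<lambda>n. h n x) \<longlonglongrightarrow> g x"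
    using AE_cube_not_in_negligible[OF N]
  proof (rule AE_mp, intro AE_I2 impI)
    fix x assume "x \<in> space cube_measure" "x \<notin> N"
    then have "(\<lambda>n. gs n x) \<longlonglongrightarrow> g x" using lim[of x] by simp
    then have "(\<lambda>n. h n x) \<longlonglongrightarrow> clip M (g x)"
      unfolding h_def by (rule continuous_on_tendsto_compose[OF continuous_on_clip[of UNIV]]) auto
    then show "(\<lambda>n. h n x) \<longlonglongrightarrow> g x" by (simp add: clip_eq_self M)
  qed
  moreover have "\<bar>g x - h n x\<bar> \<le> 2 * M" for n x using M[of x] h_bound[of n x] by linarith
  ultimately have "(\<lambda>n. sq_integral (\<lambda>x. g x - h n x)) \<longlonglongrightarrow> 0"
    using g borel_measurable_cube_continuous[OF h_cont] by (intro sq_integral_bounded_convergence)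
  from order_tendstoD(2)[OF this e] obtain n where "sq_integral (\<lambda>x. g x - h n x) < e"
    by (auto simp: eventually_sequentially)
  then show ?thesis using h_cont h_bound by blast
qed

lemma L2_approx_continuous:
  fixes g :: "real^'d::finite \<Rightarrow> real"
  assumes g: "L2 g" and e: "e > 0"
  shows "\<exists>h B. continuous_on UNIV h \<and> (\<forall>x. \<bar>h x\<bar> \<le> B) \<and> sq_integral (\<lambda>x. g x - h x) < e"
proof -
  obtain n where n: "sq_integral (\<lambda>x. g x - clip (real n) (g x)) < e / 4"
    using order_tendstoD(2)[OF sq_integral_sub_clip_tendsto[OF g], of "e / 4"] e
    by (auto simp: eventually_sequentially)
  define gn where "gn x = clip (real n) (g x)" for x
  have gn_meas: "gn \<in> borel_measurable cube_measure"
    using g continuous_on_clip unfolding gn_def L2_def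
    by (auto intro: measurable_compose[OF _ borel_measurable_continuous_onI])
  have gn_bound: "\<bar>gn x\<bar> \<le> real n" for x unfolding gn_def by (rule abs_clip_le) simp
  obtain h where h: "continuous_on UNIV h" "\<And>x. \<bar>h x\<bar> \<le> real n"
    and gnh: "sq_integral (\<lambda>x. gn x - h x) < e / 4"
    using bounded_measurable_approx_continuous[OF gn_meas gn_bound, of "e / 4"] e by auto
  have "sq_integral (\<lambda>x. g x - h x) \<le> 2 * sq_integral (\<lambda>x. g x - gn x) + 2 * sq_integral (\<lambda>x. gn x - h x)"
    using g L2_bounded[OF gn_meas gn_bound] L2_bounded[OF borel_measurable_cube_continuous[OF h(1)] h(2)]
    by (rule sq_integral_diff_le)
  also have "\<dots> < e" using n gnh by (simp add: gn_def)
  finally show ?thesis using h by blast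
qed

lemma L2_approx_cos_sum:
  fixes g :: "real^'d::finite \<Rightarrow> real"
  assumes g: "L2 g" and e: "e > 0"
  shows "\<exists>F c. finite F \<and> sq_integral (\<lambda>x. g x - cos_sum F c x) < e"
proof -
  interpret finite_measure "cube_measure :: (real^'d) measure" by (rule finite_measure_cube)
  obtain h B where h: "continuous_on UNIV h" "\<And>x. \<bar>h x\<bar> \<le> B"
    and gh: "sq_integral (\<lambda>x. g x - h x) < e / 4"
    using L2_approx_continuous[OF g, of "e / 4"] e by auto
  define V where "V = measure cube_measure (space (cube_measure :: (real^'d) measure))"
  define \<delta> where "\<delta> = sqrt (e / (4 * (V + 1)))"
  have V: "0 \<le> V" by (simp add: V_def)
  have \<delta>: "0 < \<delta>" "\<delta>\<^sup>2 = e / (4 * (V + 1))" using e V by (simp_all add: \<delta>_def)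
  obtain p where p: "cos_poly p" and hp: "\<And>x. x \<in> cbox 0 (\<chi> i. pi) \<Longrightarrow> \<bar>h x - p x\<bar> < \<delta>"
    using cos_poly_uniform_approx[OF continuous_on_subset[OF h(1)] \<delta>(1)] by auto
  obtain F c where F: "finite F" and p_eq: "p = cos_sum F c" using p by (auto simp: cos_poly_def)
  have L2h: "L2 h" by (rule L2_bounded[OF borel_measurable_cube_continuous[OF h(1)] h(2)])
  have "sq_integral (\<lambda>x. h x - p x) \<le> integral\<^sup>L cube_measure (\<lambda>x::real^'d. \<delta>\<^sup>2)"
  proof (rule Bochner_Integration.integral_mono)
    show "integrable cube_measure (\<lambda>x. (h x - p x)\<^sup>2)"
      using L2_diff[OF L2h L2_cos_sum] by (simp add: L2_def p_eq)
    show "(h x - p x)\<^sup>2 \<le> \<delta>\<^sup>2" if "x \<in> space cube_measure" for x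
    proof -
      have "\<bar>h x - p x\<bar> \<le> \<delta>" using hp[of x] that cube_subset_cbox by auto
      then have "\<bar>h x - p x\<bar>\<^sup>2 \<le> \<delta>\<^sup>2" by (rule power_mono) simp
      then show ?thesis by simp
    qed
  qed simp
  also have "\<dots> = V * (e / (4 * (V + 1)))" by (simp add: V_def \<delta>(2))
  also have "\<dots> < e / 4" using e V by (simp add: field_simps)
  finally have hp_sq: "sq_integral (\<lambda>x. h x - p x) < e / 4" .
  have "sq_integral (\<lambda>x. g x - p x) \<le> 2 * sq_integral (\<lambda>x. g x - h x) + 2 * sq_integral (\<lambda>x. h x - p x)"
    using g L2h L2_cos_sum unfolding p_eq by (rule sq_integral_diff_le)
  also have "\<dots> < e" using gh hp_sq by simp
  finally show ?thesis using F p_eq by blast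
qed

theorem parseval:
  fixes g :: "real^'d::finite \<Rightarrow> real"
  assumes g: "L2 g"
  shows "((\<lambda>q. (coeff g q)\<^sup>2 / eq_norm_sq q) has_sum sq_integral g) UNIV"
proof -
  have nonneg: "0 \<le> (coeff g q)\<^sup>2 / eq_norm_sq q" for q :: "'d \<Rightarrow> nat"
    using eq_norm_sq_pos[of q] by simp
  have summable: "(\<lambda>q. (coeff g q)\<^sup>2 / eq_norm_sq q) summable_on UNIV"
    using bessel_inequality[OF g]
    by (intro nonneg_bdd_above_summable_on[OF nonneg] bdd_aboveI2[where M = "sq_integral g"]) auto
  have "infsum (\<lambda>q. (coeff g q)\<^sup>2 / eq_norm_sq q) UNIV \<le> sq_integral g"
    using summable bessel_inequality[OF g] by (rule infsum_le_finite_sums)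
  moreover have "sq_integral g \<le> infsum (\<lambda>q. (coeff g q)\<^sup>2 / eq_norm_sq q) UNIV"
  proof (rule field_le_epsilon)
    fix e :: real assume e: "0 < e"
    obtain F c where F: "finite F" and approx: "sq_integral (\<lambda>x. g x - cos_sum F c x) < e"
      using L2_approx_cos_sum[OF g e] by auto
    have "sq_integral g \<le> (\<Sum>q\<in>F. (coeff g q)\<^sup>2 / eq_norm_sq q) + sq_integral (\<lambda>x. g x - cos_sum F c x)"
      by (rule sq_integral_le_bessel_sum[OF g F])
    also have "(\<Sum>q\<in>F. (coeff g q)\<^sup>2 / eq_norm_sq q) \<le> infsum (\<lambda>q. (coeff g q)\<^sup>2 / eq_norm_sq q) UNIV"
      using F nonneg by (intro finite_sum_le_has_sum[OF has_sum_infsum[OF summable]]) auto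
    finally show "sq_integral g \<le> infsum (\<lambda>q. (coeff g q)\<^sup>2 / eq_norm_sq q) UNIV + e"
      using approx by linarith
  qed
  ultimately have "infsum (\<lambda>q. (coeff g q)\<^sup>2 / eq_norm_sq q) UNIV = sq_integral g" by linarith
  then show ?thesis using has_sum_infsum[OF summable] by simp
qed

section \<open>The modal estimate\<close>

lemma exp_divided_difference_le:
  fixes a b L t :: real
  assumes "a < b" "b \<le> L" "0 \<le> t"
  shows "(exp (b * t) - exp (a * t)) / (b - a) \<le> 2 * exp (L * t) / (L - a)"
proof -
  define s x where "s = b - a" and "x = L - b"
  have s: "s > 0" and x: "x \<ge> 0" using assms by (simp_all add: s_def x_def)
  have "exp (- x * t) * (1 - exp (- s * t)) / s \<le> 2 / (s + x)"
  proof (cases "x \<le> s")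
    case True
    have "exp (- x * t) * (1 - exp (- s * t)) \<le> 1"
      using x s assms(3) by (intro mult_le_one) simp_all
    then have "exp (- x * t) * (1 - exp (- s * t)) / s \<le> 1 / s"
      using s by (simp add: divide_right_mono)
    also have "\<dots> \<le> 2 / (s + x)" using True s x by (simp add: field_simps)
    finally show ?thesis .
  next
    case False
    then have x0: "x > 0" using s by simp
    have "x * t \<le> exp (x * t)" using exp_ge_add_one_self[of "x * t"] by linarith
    then have xt: "x * t * exp (- x * t) \<le> 1" by (simp add: exp_minus field_simps)
    have "exp (- x * t) * (1 - exp (- s * t)) \<le> exp (- x * t) * (s * t)"
      using exp_ge_add_one_self[of "- s * t"] by (intro mult_left_mono) simp_all
    also have "\<dots> = s / x * (x * t * exp (- x * t))" using x0 by simp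
    also have "\<dots> \<le> s / x" using xt s x0 by (intro mult_left_le) simp_all
    finally have "exp (- x * t) * (1 - exp (- s * t)) / s \<le> 1 / x"
      using s by (simp add: pos_divide_le_eq)
    also have "\<dots> \<le> 2 / (s + x)" using False s by (simp add: field_simps)
    finally show ?thesis .
  qed
  then have "exp (L * t) * (exp (- x * t) * (1 - exp (- s * t)) / s) \<le> exp (L * t) * (2 / (s + x))"
    by (rule mult_left_mono) simp
  moreover have "exp (b * t) - exp (a * t) = exp (L * t) * (exp (- x * t) * (1 - exp (- s * t)))"
    by (simp add: s_def x_def algebra_simps flip: exp_add)
  ultimately show ?thesis by (simp add: s_def x_def mult.commute)
qed

lemma sum_sq_le_two_by_two_entry_bound:
  fixes a b c d x y K :: real
  assumes "\<bar>a\<bar> \<le> K" "\<bar>b\<bar> \<le> K" "\<bar>c\<bar> \<le> K" "\<bar>d\<bar> \<le> K"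
  shows "(a * x + b * y)\<^sup>2 + (c * x + d * y)\<^sup>2 \<le> (2 * K)\<^sup>2 * (x\<^sup>2 + y\<^sup>2)"
proof -
  have row: "(r * x + s * y)\<^sup>2 \<le> 2 * K\<^sup>2 * (x\<^sup>2 + y\<^sup>2)" if "\<bar>r\<bar> \<le> K" "\<bar>s\<bar> \<le> K" for r s
  proof -
    have "\<bar>r * x + s * y\<bar> \<le> K * (\<bar>x\<bar> + \<bar>y\<bar>)"
      using that by (simp add: abs_mult distrib_left abs_triangle_ineq[THEN order_trans]
          add_mono mult_right_mono)
    then have "(r * x + s * y)\<^sup>2 \<le> K\<^sup>2 * (\<bar>x\<bar> + \<bar>y\<bar>)\<^sup>2"
      by (metis abs_ge_zero power2_abs power_mono power_mult_distrib)
    also have "\<dots> \<le> K\<^sup>2 * (2 * (x\<^sup>2 + y\<^sup>2))"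
      using zero_le_power2[of "\<bar>x\<bar> - \<bar>y\<bar>"]
      by (intro mult_left_mono) (simp_all add: power2_eq_square algebra_simps)
    finally show ?thesis by (simp add: algebra_simps)
  qed
  show ?thesis using row[OF assms(1,2)] row[OF assms(3,4)] by (simp add: power_mult_distrib)
qed

lemma qsq_nonneg: "0 \<le> qsq q"
  unfolding qsq_def by (rule sum_nonneg) simp

locale keller_segel =
  fixes mu chi D f k U :: real
  assumes mu_pos: "mu > 0" and chi_pos: "chi > 0" and D_pos: "D > 0"
    and f_pos: "f > 0" and k_pos: "k > 0" and U_pos: "U > 0"
begin

abbreviation lm :: "('d::finite \<Rightarrow> nat) \<Rightarrow> real" where
  "lm \<equiv> lam_minus mu chi D f k U"

abbreviation lp :: "('d::finite \<Rightarrow> nat) \<Rightarrow> real" where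
  "lp \<equiv> lam_plus mu chi D f k U"

definition neg_trace :: "('d::finite \<Rightarrow> nat) \<Rightarrow> real" where
  "neg_trace q = qsq q * (mu + D) + k"

definition decay :: "('d::finite \<Rightarrow> nat) \<Rightarrow> real" where
  "decay q = D * qsq q + k"

definition disc :: "('d::finite \<Rightarrow> nat) \<Rightarrow> real" where
  "disc q = (neg_trace q)\<^sup>2 - 4 * (qsq q * (mu * (D * qsq q + k) - chi * U * f))"

definition lam_bound :: real where
  "lam_bound = chi * U * f / (mu + D)"

lemma lam_minus_eq: "lm q = (- neg_trace q - sqrt (disc q)) / 2"
  by (simp add: lam_minus_def neg_trace_def disc_def Let_def)

lemma lam_plus_eq: "lp q = (- neg_trace q + sqrt (disc q)) / 2"
  by (simp add: lam_plus_def neg_trace_def disc_def Let_def)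

lemma neg_trace_ge: "k \<le> neg_trace q" "qsq q * (mu + D) \<le> neg_trace q"
  using qsq_nonneg[of q] mu_pos D_pos k_pos by (simp_all add: neg_trace_def)

lemma neg_trace_eq: "neg_trace q = mu * qsq q + decay q"
  by (simp add: neg_trace_def decay_def algebra_simps)

lemma disc_eq: "disc q = (mu * qsq q - decay q)\<^sup>2 + 4 * (chi * U * f * qsq q)"
  by (simp add: disc_def neg_trace_def decay_def power2_eq_square algebra_simps)

lemma disc_pos: "disc q > 0"
proof (cases "qsq q = 0")
  case True
  then show ?thesis using k_pos by (simp add: disc_eq decay_def)
next
  case False
  then have "chi * U * f * qsq q > 0"
    using qsq_nonneg[of q] chi_pos U_pos f_pos by simp
  then show ?thesis unfolding disc_eq by (simp add: add_nonneg_pos)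
qed

lemma lam_sum: "lm q + lp q = - neg_trace q"
  by (simp add: lam_minus_eq lam_plus_eq field_simps)

lemma lam_diff: "lp q - lm q = sqrt (disc q)"
  by (simp add: lam_minus_eq lam_plus_eq field_simps)

lemma lam_minus_less: "lm q < lp q"
  using lam_diff[of q] real_sqrt_gt_zero[OF disc_pos[of q]] by linarith

lemma lam_shifted_prod: "(lp q + decay q) * (lm q + decay q) = - (chi * U * f * qsq q)"
proof -
  have "(lp q + decay q) * (lm q + decay q) = ((decay q - mu * qsq q)\<^sup>2 - (sqrt (disc q))\<^sup>2) / 4"
    by (simp add: lam_minus_eq lam_plus_eq neg_trace_eq power2_eq_square field_simps)
  also have "\<dots> = - (chi * U * f * qsq q)"
    using disc_pos[of q] by (simp add: disc_eq power2_commute)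
  finally show ?thesis .
qed

lemma lam_plus_le: "lp q \<le> lam_bound"
proof -
  have muD: "mu + D > 0" using mu_pos D_pos by simp
  have "4 * (chi * U * f * qsq q) \<le> 2 * neg_trace q * (2 * lam_bound)"
  proof -
    have "chi * U * f * qsq q = lam_bound * (qsq q * (mu + D))"
      using muD by (simp add: lam_bound_def)
    also have "\<dots> \<le> lam_bound * neg_trace q"
      using neg_trace_ge(2) chi_pos U_pos f_pos muD
      by (intro mult_left_mono) (simp_all add: lam_bound_def)
    finally show ?thesis by (simp add: mult_ac)
  qed
  moreover have "(mu * qsq q - decay q)\<^sup>2 \<le> (neg_trace q)\<^sup>2"
  proof -
    have "\<bar>mu * qsq q - decay q\<bar> \<le> \<bar>neg_trace q\<bar>"
      using qsq_nonneg[of q] mu_pos D_pos k_pos by (simp add: neg_trace_eq decay_def abs_le_iff)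
    then show ?thesis by (simp add: abs_le_square_iff)
  qed
  ultimately have "disc q \<le> (neg_trace q + 2 * lam_bound)\<^sup>2"
    unfolding disc_eq power2_sum using zero_le_power2[of "2 * lam_bound"] by linarith
  then have "sqrt (disc q) \<le> neg_trace q + 2 * lam_bound"
    using neg_trace_ge(1)[of q] k_pos chi_pos U_pos f_pos muD
    by (intro real_le_lsqrt) (simp_all add: lam_bound_def less_imp_le disc_pos)
  then show ?thesis by (simp add: lam_plus_eq)
qed

lemma lam_plus_zero: "lp (\<lambda>_::'d::finite. 0) = 0"
  using k_pos by (simp add: lam_plus_eq disc_def neg_trace_def qsq_def)

lemma lam_max_ge: "lp (q::'d::finite \<Rightarrow> nat) \<le> lam_max mu chi D f k U TYPE('d)"
  unfolding lam_max_def by (rule cSUP_upper) (auto intro!: bdd_aboveI2 lam_plus_le)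

lemma lam_max_nonneg: "0 \<le> lam_max mu chi D f k U TYPE('d::finite)"
  using lam_max_ge[of "\<lambda>_::'d. 0"] by (simp add: lam_plus_zero)

definition exp_divdiff :: "('d::finite \<Rightarrow> nat) \<Rightarrow> real \<Rightarrow> real" where
  "exp_divdiff q t = (exp (lp q * t) - exp (lm q * t)) / (lp q - lm q)"

lemma mode_propagator:
  fixes q :: "'d::finite \<Rightarrow> nat" and wm wp t :: real
  defines "a0 \<equiv> wm * rfirst D f k (lm q) q + wp * rfirst D f k (lp q) q"
    and "b0 \<equiv> wm + wp" and "y \<equiv> exp_divdiff q t"
  shows "wm * rfirst D f k (lm q) q * exp (lm q * t) + wp * rfirst D f k (lp q) q * exp (lp q * t)
           = (exp (lm q * t) + (lp q + decay q) * y) * a0 + (chi * U * qsq q * y) * b0"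
    and "wm * exp (lm q * t) + wp * exp (lp q * t)
           = (f * y) * a0 + (exp (lm q * t) - (lm q + decay q) * y) * b0"
proof -
  define r1 r2 where "r1 = rfirst D f k (lm q) q" and "r2 = rfirst D f k (lp q) q"
  have r: "r1 * f = lm q + decay q" "r2 * f = lp q + decay q"
    using f_pos by (simp_all add: r1_def r2_def rfirst_def decay_def)
  have cross: "r1 * (lp q + decay q) = - (chi * U * qsq q)" "r2 * (lm q + decay q) = - (chi * U * qsq q)"
    using lam_shifted_prod[of q] f_pos
    by (simp_all add: r1_def r2_def rfirst_def decay_def field_simps)
  have e: "exp (lp q * t) = exp (lm q * t) + (lp q - lm q) * y"
    using lam_minus_less[of q] by (simp add: y_def exp_divdiff_def)
  show "wm * rfirst D f k (lm q) q * exp (lm q * t) + wp * rfirst D f k (lp q) q * exp (lp q * t)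
           = (exp (lm q * t) + (lp q + decay q) * y) * a0 + (chi * U * qsq q * y) * b0"
    unfolding a0_def b0_def r1_def[symmetric] r2_def[symmetric] e using cross by algebra
  show "wm * exp (lm q * t) + wp * exp (lp q * t)
           = (f * y) * a0 + (exp (lm q * t) - (lm q + decay q) * y) * b0"
    unfolding a0_def b0_def r1_def[symmetric] r2_def[symmetric] e using r by algebra
qed

lemma exp_divdiff_bounds:
  assumes "0 \<le> t" "lp q \<le> L" "0 \<le> L"
  shows "0 \<le> exp_divdiff q t" "exp_divdiff q t \<le> 4 * exp (L * t) / neg_trace q"
proof -
  have lt: "lm q < lp q" by (rule lam_minus_less)
  show "0 \<le> exp_divdiff q t"
    unfolding exp_divdiff_def using lt assms(1) by (simp add: mult_right_mono)
  have N: "0 < neg_trace q" using neg_trace_ge(1)[of q] k_pos by simp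
  have "neg_trace q / 2 \<le> L - lm q" using lam_sum[of q] lt assms(3) by linarith
  then have "2 * exp (L * t) / (L - lm q) \<le> 2 * exp (L * t) / (neg_trace q / 2)"
    using N by (intro divide_left_mono) simp_all
  then show "exp_divdiff q t \<le> 4 * exp (L * t) / neg_trace q"
    using exp_divided_difference_le[OF lt assms(2,1)] by (simp add: exp_divdiff_def)
qed

definition mode_const :: real where
  "mode_const = 5 + 4 * (lam_bound / k + chi * U / (mu + D) + f / k)"

lemma abs_lam_shift_le:
  "\<bar>lp q + decay q\<bar> \<le> neg_trace q + lam_bound" "\<bar>lm q + decay q\<bar> \<le> neg_trace q + lam_bound"
proof -
  have "0 \<le> decay q" "decay q \<le> neg_trace q"
    using qsq_nonneg[of q] mu_pos D_pos k_pos by (simp_all add: decay_def neg_trace_eq)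
  moreover have "0 \<le> lam_bound" using chi_pos U_pos f_pos mu_pos D_pos by (simp add: lam_bound_def)
  ultimately show "\<bar>lp q + decay q\<bar> \<le> neg_trace q + lam_bound"
    and "\<bar>lm q + decay q\<bar> \<le> neg_trace q + lam_bound"
    using lam_sum[of q] lam_minus_less[of q] lam_plus_le[of q] unfolding abs_le_iff by linarith+
qed

lemma propagator_diag_le:
  assumes "0 \<le> t" "lp q \<le> L" "0 \<le> L" and s: "\<bar>s\<bar> \<le> neg_trace q + lam_bound"
  shows "\<bar>exp (lm q * t) + s * exp_divdiff q t\<bar> \<le> mode_const * exp (L * t)"
proof -
  define y E where "y = exp_divdiff q t" and "E = exp (L * t)"
  have N: "0 < neg_trace q" "k \<le> neg_trace q" using neg_trace_ge(1)[of q] k_pos by simp_all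
  have y: "0 \<le> y" "y \<le> 4 * E / neg_trace q"
    using exp_divdiff_bounds[OF assms(1-3)] by (simp_all add: y_def E_def)
  have Lb: "0 \<le> lam_bound" using chi_pos U_pos f_pos mu_pos D_pos by (simp add: lam_bound_def)
  have "\<bar>exp (lm q * t)\<bar> \<le> E"
    using lam_minus_less[of q] assms(1,2) by (simp add: E_def mult_right_mono)
  then have "\<bar>exp (lm q * t) + s * y\<bar> \<le> E + (neg_trace q + lam_bound) * y"
    using s y(1) by (simp add: abs_mult abs_triangle_ineq[THEN order_trans] add_mono mult_right_mono)
  also have "\<dots> \<le> E + (neg_trace q + lam_bound) * (4 * E / neg_trace q)"
    using y Lb N by (intro add_left_mono mult_left_mono) simp_all
  also have "\<dots> = E * (5 + 4 * (lam_bound / neg_trace q))" using N by (simp add: field_simps)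
  also have "\<dots> \<le> E * (5 + 4 * (lam_bound / k))"
    using N Lb k_pos by (intro mult_left_mono add_left_mono divide_left_mono) (simp_all add: E_def)
  also have "\<dots> \<le> E * mode_const"
    using chi_pos U_pos f_pos mu_pos D_pos k_pos
    by (intro mult_left_mono) (simp_all add: mode_const_def E_def)
  finally show ?thesis by (simp add: y_def E_def mult.commute)
qed

lemma propagator_offdiag_le:
  assumes "0 \<le> t" "lp q \<le> L" "0 \<le> L"
  shows "\<bar>chi * U * qsq q * exp_divdiff q t\<bar> \<le> mode_const * exp (L * t)"
    and "\<bar>f * exp_divdiff q t\<bar> \<le> mode_const * exp (L * t)"
proof -
  define y E where "y = exp_divdiff q t" and "E = exp (L * t)"
  have muD: "0 < mu + D" using mu_pos D_pos by simp
  have N: "0 < neg_trace q" "k \<le> neg_trace q" using neg_trace_ge(1)[of q] k_pos by simp_all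
  have y: "0 \<le> y" "y \<le> 4 * E / neg_trace q"
    using exp_divdiff_bounds[OF assms] by (simp_all add: y_def E_def)
  have E: "0 < E" by (simp add: E_def)
  have K: "4 * (chi * U) / (mu + D) \<le> mode_const" "4 * f / k \<le> mode_const"
    using chi_pos U_pos f_pos k_pos muD by (simp_all add: mode_const_def lam_bound_def)
  have "\<bar>chi * U * qsq q * y\<bar> = chi * U * (qsq q * y)"
    using chi_pos U_pos qsq_nonneg[of q] y(1) by (simp add: abs_mult)
  also have "\<dots> \<le> chi * U * (qsq q * (4 * E / neg_trace q))"
    using chi_pos U_pos qsq_nonneg[of q] y by (intro mult_left_mono) simp_all
  also have "\<dots> = 4 * (chi * U) * E * (qsq q / neg_trace q)" by simp
  also have "\<dots> \<le> 4 * (chi * U) * E * (1 / (mu + D))"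
    using neg_trace_ge(2)[of q] N muD chi_pos U_pos E
    by (intro mult_left_mono) (simp_all add: field_simps)
  also have "\<dots> \<le> mode_const * E" using mult_right_mono[OF K(1), of E] E by simp
  finally show "\<bar>chi * U * qsq q * y\<bar> \<le> mode_const * E" .
  have "4 * E / neg_trace q \<le> 4 * E / k" using N E k_pos by (intro divide_left_mono) simp_all
  then have "\<bar>f * y\<bar> \<le> f * (4 * E / k)"
    using f_pos y by (simp only: abs_mult abs_of_pos abs_of_nonneg) (intro mult_left_mono; simp)
  also have "\<dots> \<le> mode_const * E" using mult_right_mono[OF K(2), of E] E by (simp add: mult_ac)
  finally show "\<bar>f * y\<bar> \<le> mode_const * E" .
qed

lemma mode_estimate:
  fixes q :: "'d::finite \<Rightarrow> nat" and wm wp t L :: real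
  assumes "0 \<le> t" "lp q \<le> L" "0 \<le> L"
  shows "(wm * rfirst D f k (lm q) q * exp (lm q * t) + wp * rfirst D f k (lp q) q * exp (lp q * t))\<^sup>2
           + (wm * exp (lm q * t) + wp * exp (lp q * t))\<^sup>2
         \<le> (2 * mode_const * exp (L * t))\<^sup>2
             * ((wm * rfirst D f k (lm q) q + wp * rfirst D f k (lp q) q)\<^sup>2 + (wm + wp)\<^sup>2)"
proof -
  have "\<bar>exp (lm q * t) - (lm q + decay q) * exp_divdiff q t\<bar> \<le> mode_const * exp (L * t)"
    using propagator_diag_le[OF assms, of "- (lm q + decay q)"] abs_lam_shift_le(2)[of q]
    by (metis abs_minus_cancel diff_conv_add_uminus mult_minus_left)
  then show ?thesis
    unfolding mode_propagator[where q = q and wm = wm and wp = wp and t = t]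
    using sum_sq_le_two_by_two_entry_bound[OF propagator_diag_le[OF assms abs_lam_shift_le(1)]
        propagator_offdiag_le[OF assms]]
    by (simp add: mult.assoc)
qed

lemma ks_solution_coeff_estimate:
  fixes u0 v0 :: "real^'d::finite \<Rightarrow> real"
  assumes sol: "ks_solution mu chi D f k U u0 v0 u v" and t: "0 \<le> t"
  shows "(coeff (u t) q)\<^sup>2 + (coeff (v t) q)\<^sup>2
           \<le> (2 * mode_const * exp (lam_max mu chi D f k U TYPE('d) * t))\<^sup>2
               * ((coeff u0 q)\<^sup>2 + (coeff v0 q)\<^sup>2)"
proof -
  obtain wm wp :: "('d \<Rightarrow> nat) \<Rightarrow> real" where w:
    "coeff u0 q = wm q * rfirst D f k (lm q) q + wp q * rfirst D f k (lp q) q"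
    "coeff v0 q = wm q + wp q"
    "coeff (u t) q
       = wm q * rfirst D f k (lm q) q * exp (lm q * t) + wp q * rfirst D f k (lp q) q * exp (lp q * t)"
    "coeff (v t) q = wm q * exp (lm q * t) + wp q * exp (lp q * t)"
    using sol t unfolding ks_solution_def Let_def by blast
  show ?thesis unfolding w by (rule mode_estimate[OF t lam_max_ge lam_max_nonneg])
qed

end

lemma L2norm_eq_sqrt:
  "L2 u \<Longrightarrow> L2 v \<Longrightarrow> L2norm u v = sqrt (sq_integral u + sq_integral v)"
  unfolding L2norm_def L2_def by (simp add: Bochner_Integration.integral_add)

lemma L2norm_le_of_coeff_le:
  fixes u0 v0 u v :: "real^'d::finite \<Rightarrow> real"
  assumes "L2 u0" "L2 v0" "L2 u" "L2 v" and "0 \<le> C"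
    and coeff_le: "\<And>q. (coeff u q)\<^sup>2 + (coeff v q)\<^sup>2 \<le> C\<^sup>2 * ((coeff u0 q)\<^sup>2 + (coeff v0 q)\<^sup>2)"
  shows "L2norm u v \<le> C * L2norm u0 v0"
proof -
  have "((\<lambda>q. ((coeff u q)\<^sup>2 + (coeff v q)\<^sup>2) / eq_norm_sq q)
      has_sum (sq_integral u + sq_integral v)) UNIV"
    using has_sum_add[OF parseval[OF \<open>L2 u\<close>] parseval[OF \<open>L2 v\<close>]] by (simp add: add_divide_distrib)
  moreover have "((\<lambda>q. C\<^sup>2 * (((coeff u0 q)\<^sup>2 + (coeff v0 q)\<^sup>2) / eq_norm_sq q))
      has_sum (C\<^sup>2 * (sq_integral u0 + sq_integral v0))) UNIV"
    using has_sum_cmult_right[OF has_sum_add[OF parseval[OF \<open>L2 u0\<close>] parseval[OF \<open>L2 v0\<close>]]]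
    by (simp add: add_divide_distrib)
  moreover have "((coeff u q)\<^sup>2 + (coeff v q)\<^sup>2) / eq_norm_sq q
      \<le> C\<^sup>2 * (((coeff u0 q)\<^sup>2 + (coeff v0 q)\<^sup>2) / eq_norm_sq q)" for q :: "'d \<Rightarrow> nat"
    using divide_right_mono[OF coeff_le less_imp_le[OF eq_norm_sq_pos]] by simp
  ultimately have "sq_integral u + sq_integral v \<le> C\<^sup>2 * (sq_integral u0 + sq_integral v0)"
    by (rule has_sum_mono)
  then have "sqrt (sq_integral u + sq_integral v) \<le> sqrt (C\<^sup>2 * (sq_integral u0 + sq_integral v0))"
    by (rule real_sqrt_le_mono)
  also have "\<dots> = C * sqrt (sq_integral u0 + sq_integral v0)"
    using \<open>0 \<le> C\<close> by (simp add: real_sqrt_mult)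
  finally show ?thesis using assms(1-4) by (simp add: L2norm_eq_sqrt)
qed

theorem lemma1:
  fixes mu chi D f k U :: real
  assumes "mu > 0" "chi > 0" "D > 0" "f > 0" "k > 0" "U > 0"
    and "CARD('d::finite) \<in> {1, 2, 3}"
    and "\<exists>q::'d \<Rightarrow> nat. mu * (D * qsq q + k) - chi * U * f < 0"
  shows "\<exists>C1\<ge>1. \<forall>(u0::real^'d \<Rightarrow> real) v0 u v.
           L2 u0 \<and> L2 v0 \<and> (\<forall>t\<ge>0. L2 (u t) \<and> L2 (v t)) \<and>
           ks_solution mu chi D f k U u0 v0 u v \<longrightarrow>
           (\<forall>t\<ge>0. L2norm (u t) (v t) \<le> C1 * exp (lam_max mu chi D f k U TYPE('d) * t) * L2norm u0 v0)"
proof -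
  interpret keller_segel mu chi D f k U
    using assms(1-6) by unfold_locales
  have K: "5 \<le> mode_const"
    using assms(1-6) by (simp add: mode_const_def lam_bound_def)
  show ?thesis
  proof (intro exI[of _ "2 * mode_const"] conjI allI impI)
    fix u0 v0 :: "real^'d \<Rightarrow> real" and u v :: "real \<Rightarrow> real^'d \<Rightarrow> real" and t :: real
    assume H: "L2 u0 \<and> L2 v0 \<and> (\<forall>t\<ge>0. L2 (u t) \<and> L2 (v t)) \<and> ks_solution mu chi D f k U u0 v0 u v"
      and t: "0 \<le> t"
    show "L2norm (u t) (v t) \<le> 2 * mode_const * exp (lam_max mu chi D f k U TYPE('d) * t) * L2norm u0 v0"
      using H t K ks_solution_coeff_estimate[of u0 v0 u v t]
      by (intro L2norm_le_of_coeff_le) simp_all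
  qed (use K in simp)
qed

end
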